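(* Let $n\ge2$, $m\ge0$ and $p$ be fixed integers with $0\le p\le 2n+\lfloor m/2\rfloor-3$. Then there is a polynomial $\beta_p(j)$ in $j$ of degree at most $2(2n+\lfloor m/2\rfloor-3-p)$ such that for every integer $j$ with $1\le j\le n-1$, the coefficient of $x^p$ in $$(2x+m+1)_j\,(x-j+2)_{\lfloor m/2\rfloor+j-1}\,(x+m+2j+1)_{2n-2j-2}$$ equals $2^j\beta_p(j)$.
   Context: $(a)_k:=a(a+1)\cdots(a+k-1)$ for $k\ge1$, $(a)_0:=1$. *)

theory Defs
  imports "HOL-Computational_Algebra.Polynomial"
begin

end

theory Submission imports Defs begin

text \<open>After dividing the first factor by \<open>2 ^ j\<close>, the product is a monic polynomial of
  degree \<open>N = 2n + \<lfloor>m/2\<rfloor> - 3\<close> whose roots are the negatives of three arithmetic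
  progressions, each with an endpoint independent of \<open>j\<close> and a length affine in \<open>j\<close>.
  The coefficient of \<open>x ^ p\<close> is the elementary symmetric function \<open>e (N - p)\<close> of these
  numbers. For one progression \<open>c 0, c 1, \<dots>\<close> of length \<open>L\<close> we have
  \<open>e (k + 1) L = (\<Sum>i<L. c i * e k i)\<close>, so by Faulhaber summation \<open>e k L\<close> is a
  polynomial of degree at most \<open>2 k\<close> in \<open>L\<close>, hence in \<open>j\<close>. The elementary symmetric
  functions of the union of the progressions are convolutions of these and obey the same
  bound.\<close>

definition poly_fun_on :: "nat set \<Rightarrow> nat \<Rightarrow> (nat \<Rightarrow> 'a::comm_ring_1) \<Rightarrow> bool" where
  "poly_fun_on S d f \<longleftrightarrow> (\<exists>r. degree r \<le> d \<and> (\<forall>j\<in>S. f j = poly r (of_nat j)))"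

lemma poly_fun_on_const: "poly_fun_on S 0 (\<lambda>_. c)"
  unfolding poly_fun_on_def by (rule exI[of _ "[:c:]"]) simp

lemma poly_fun_on_of_nat: "poly_fun_on S 1 of_nat"
  unfolding poly_fun_on_def by (rule exI[of _ "[:0, 1:]"]) simp

lemma poly_fun_on_mono: "poly_fun_on S d f \<Longrightarrow> d \<le> d' \<Longrightarrow> poly_fun_on S d' f"
  unfolding poly_fun_on_def by (meson order_trans)

lemma poly_fun_on_add:
  assumes "poly_fun_on S d f" "poly_fun_on S d g"
  shows "poly_fun_on S d (\<lambda>j. f j + g j)"
proof -
  obtain r s where "degree r \<le> d" "\<forall>j\<in>S. f j = poly r (of_nat j)"
    and "degree s \<le> d" "\<forall>j\<in>S. g j = poly s (of_nat j)"
    using assms unfolding poly_fun_on_def by blast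
  then show ?thesis unfolding poly_fun_on_def
    by (intro exI[of _ "r + s"]) (auto intro: order_trans[OF degree_add_le_max])
qed

lemma poly_fun_on_diff:
  assumes "poly_fun_on S d f" "poly_fun_on S d g"
  shows "poly_fun_on S d (\<lambda>j. f j - g j)"
proof -
  obtain r s where "degree r \<le> d" "\<forall>j\<in>S. f j = poly r (of_nat j)"
    and "degree s \<le> d" "\<forall>j\<in>S. g j = poly s (of_nat j)"
    using assms unfolding poly_fun_on_def by blast
  then show ?thesis unfolding poly_fun_on_def
    by (intro exI[of _ "r - s"]) (auto intro: order_trans[OF degree_diff_le_max])
qed

lemma poly_fun_on_mult:
  assumes "poly_fun_on S d f" "poly_fun_on S e g"
  shows "poly_fun_on S (d + e) (\<lambda>j. f j * g j)"
proof -
  obtain r s where "degree r \<le> d" "\<forall>j\<in>S. f j = poly r (of_nat j)"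
    and "degree s \<le> e" "\<forall>j\<in>S. g j = poly s (of_nat j)"
    using assms unfolding poly_fun_on_def by blast
  then show ?thesis unfolding poly_fun_on_def
    by (intro exI[of _ "r * s"]) (auto intro: order_trans[OF degree_mult_le])
qed

lemma poly_fun_on_scale: "poly_fun_on S d f \<Longrightarrow> poly_fun_on S d (\<lambda>j. c * f j)"
  using poly_fun_on_mult[OF poly_fun_on_const[of S c]] by simp

lemma poly_fun_on_sum:
  "finite A \<Longrightarrow> (\<And>a. a \<in> A \<Longrightarrow> poly_fun_on S d (f a))
    \<Longrightarrow> poly_fun_on S d (\<lambda>j. \<Sum>a\<in>A. f a j)"
proof (induction A rule: finite_induct)
  case empty
  then show ?case using poly_fun_on_mono[OF poly_fun_on_const[of S 0]] by simp
next
  case (insert x F)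
  then show ?case using poly_fun_on_add[of S d "f x" "\<lambda>j. \<Sum>a\<in>F. f a j"] by simp
qed

lemma poly_fun_on_power: "poly_fun_on S d f \<Longrightarrow> poly_fun_on S (d * e) (\<lambda>j. f j ^ e)"
proof (induction e)
  case 0
  then show ?case using poly_fun_on_const[of S 1] by simp
next
  case (Suc e)
  then show ?case using poly_fun_on_mult[of S d f "d * e" "\<lambda>j. f j ^ e"] by simp
qed

lemma poly_fun_on_compose_affine:
  fixes f :: "nat \<Rightarrow> 'a::comm_ring_1" and b c :: 'a
  assumes "poly_fun_on UNIV d f" "\<forall>j\<in>S. of_nat (L j) = b + c * of_nat j"
  shows "poly_fun_on S d (\<lambda>j. f (L j))"
proof -
  obtain r where r: "degree r \<le> d" "\<forall>j. f j = poly r (of_nat j)"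
    using assms(1) unfolding poly_fun_on_def by auto
  have "degree (pcompose r [:b, c:]) \<le> degree r * degree [:b, c:]"
    by (rule degree_pcompose_le)
  also have "\<dots> \<le> d"
    using r(1) by (simp add: degree_pCons_eq_if)
  finally have "degree (pcompose r [:b, c:]) \<le> d" .
  moreover have "\<forall>j\<in>S. f (L j) = poly (pcompose r [:b, c:]) (of_nat j)"
    using r(2) assms(2) by (simp add: poly_pcompose mult.commute)
  ultimately show ?thesis unfolding poly_fun_on_def by blast
qed

lemma power_sums_pascal:
  "(of_nat L :: 'a::comm_ring_1) ^ Suc d = (\<Sum>e\<le>d. of_nat (Suc d choose e) * (\<Sum>i<L. of_nat i ^ e))"
proof -
  have "(of_nat L :: 'a) ^ Suc d = (\<Sum>i<L. of_nat (Suc i) ^ Suc d - of_nat i ^ Suc d)"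
    using sum_lessThan_telescope[of "\<lambda>i. (of_nat i :: 'a) ^ Suc d" L] by simp
  also have "\<dots> = (\<Sum>i<L. \<Sum>e\<le>d. of_nat (Suc d choose e) * of_nat i ^ e)"
  proof (rule sum.cong[OF refl])
    fix i
    have "(of_nat (Suc i) :: 'a) ^ Suc d
        = (\<Sum>k\<le>Suc d. of_nat (Suc d choose k) * of_nat i ^ k * 1 ^ (Suc d - k))"
      using binomial_ring[of "of_nat i :: 'a" 1 "Suc d"] by (simp add: add.commute)
    also have "\<dots> = (\<Sum>e\<le>d. of_nat (Suc d choose e) * of_nat i ^ e) + of_nat i ^ Suc d"
      by (simp add: sum.atMost_Suc)
    finally show "(of_nat (Suc i) :: 'a) ^ Suc d - of_nat i ^ Suc d
        = (\<Sum>e\<le>d. of_nat (Suc d choose e) * of_nat i ^ e)"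
      by simp
  qed
  also have "\<dots> = (\<Sum>e\<le>d. of_nat (Suc d choose e) * (\<Sum>i<L. of_nat i ^ e))"
    by (subst sum.swap) (simp add: sum_distrib_left)
  finally show ?thesis .
qed

lemma poly_fun_on_power_sum:
  "poly_fun_on UNIV (Suc d) (\<lambda>L. \<Sum>i<L. (of_nat i :: 'a::field_char_0) ^ d)"
proof (induction d rule: less_induct)
  case (less d)
  define P where "P e L = (\<Sum>i<L. (of_nat i :: 'a) ^ e)" for e L
  have P_eq: "P d L
      = (of_nat L ^ Suc d - (\<Sum>e<d. of_nat (Suc d choose e) * P e L)) / of_nat (Suc d)" for L
  proof -
    have "(of_nat L :: 'a) ^ Suc d
        = (\<Sum>e<d. of_nat (Suc d choose e) * P e L) + of_nat (Suc d) * P d L"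
      unfolding power_sums_pascal P_def by (simp add: lessThan_Suc_atMost[symmetric])
    moreover have "(of_nat (Suc d) :: 'a) \<noteq> 0"
      by (rule of_nat_neq_0)
    ultimately show ?thesis by (simp add: eq_divide_eq algebra_simps)
  qed
  have "poly_fun_on UNIV (Suc d) (\<lambda>L. inverse (of_nat (Suc d)) *
      (of_nat L ^ Suc d - (\<Sum>e<d. of_nat (Suc d choose e) * P e L)))"
  proof (intro poly_fun_on_scale poly_fun_on_diff poly_fun_on_sum)
    show "poly_fun_on UNIV (Suc d) (\<lambda>L. (of_nat L :: 'a) ^ Suc d)"
      using poly_fun_on_power[OF poly_fun_on_of_nat, of UNIV "Suc d"] by simp
    fix e assume "e \<in> {..<d}"
    then show "poly_fun_on UNIV (Suc d) (P e)"
      using poly_fun_on_mono[OF less[of e]] unfolding P_def by simp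
  qed simp
  then show ?case using P_eq unfolding P_def by (simp add: divide_inverse mult.commute)
qed

lemma poly_fun_on_partial_sums:
  fixes f :: "nat \<Rightarrow> 'a::field_char_0"
  assumes "poly_fun_on UNIV d f"
  shows "poly_fun_on UNIV (Suc d) (\<lambda>L. \<Sum>i<L. f i)"
proof -
  obtain r where r: "degree r \<le> d" "\<forall>j. f j = poly r (of_nat j)"
    using assms unfolding poly_fun_on_def by auto
  have "(\<Sum>i<L. f i) = (\<Sum>e\<le>degree r. coeff r e * (\<Sum>i<L. of_nat i ^ e))" for L
    using r(2) by (simp add: poly_altdef sum_distrib_left sum.swap[of _ "{..<L}"])
  moreover have "poly_fun_on UNIV (Suc d)
      (\<lambda>L. \<Sum>e\<le>degree r. coeff r e * (\<Sum>i<L. (of_nat i :: 'a) ^ e))"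
    using r(1) by (intro poly_fun_on_sum poly_fun_on_scale)
      (auto intro: poly_fun_on_mono[OF poly_fun_on_power_sum])
  ultimately show ?thesis by simp
qed

text \<open>\<open>coeff (reflect_poly (ap_poly a \<delta> L)) k\<close> is the \<open>k\<close>-th elementary symmetric function
  of \<open>a, a + \<delta>, \<dots>, a + (L - 1) * \<delta>\<close>.\<close>

definition ap_poly :: "'a::comm_semiring_1 \<Rightarrow> 'a \<Rightarrow> nat \<Rightarrow> 'a poly" where
  "ap_poly a \<delta> L = (\<Prod>i<L. [:a + of_nat i * \<delta>, 1:])"

lemma ap_poly_Suc: "ap_poly a \<delta> (Suc L) = ap_poly a \<delta> L * [:a + of_nat L * \<delta>, 1:]"
  unfolding ap_poly_def by (simp add: lessThan_Suc)

lemma degree_ap_poly: "degree (ap_poly a \<delta> L :: 'a::idom poly) = L"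
  unfolding ap_poly_def by (subst degree_prod_sum_eq) auto

lemma reflect_ap_poly_Suc:
  "reflect_poly (ap_poly a \<delta> (Suc L))
     = [:1, a + of_nat L * \<delta>:] * reflect_poly (ap_poly a \<delta> L :: 'a::idom poly)"
proof -
  have "reflect_poly [:c, 1:] = [:1, c:]" for c :: 'a
    by (simp add: reflect_poly_def)
  then show ?thesis
    unfolding ap_poly_Suc reflect_poly_mult by (simp only: mult.commute)
qed

lemma lead_coeff_ap_poly: "lead_coeff (ap_poly a \<delta> L :: 'a::idom poly) = 1"
  unfolding ap_poly_def by (simp add: lead_coeff_prod)

lemma ap_poly_neq_0: "ap_poly a \<delta> L \<noteq> (0 :: 'a::idom poly)"
  using lead_coeff_ap_poly[of a \<delta> L] by auto

lemma coeff_Suc_reflect_ap_poly: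
  "coeff (reflect_poly (ap_poly a \<delta> L)) (Suc k)
     = (\<Sum>i<L. (a + of_nat i * \<delta>) * coeff (reflect_poly (ap_poly a \<delta> i)) k :: 'a::idom)"
  by (induction L) (simp_all add: reflect_ap_poly_Suc, simp add: ap_poly_def)

lemma poly_fun_on_coeff_reflect_ap_poly:
  "poly_fun_on UNIV (2 * k) (\<lambda>L. coeff (reflect_poly (ap_poly a \<delta> L)) k :: 'a::field_char_0)"
proof (induction k)
  case 0
  then show ?case using poly_fun_on_const[of UNIV 1] by (simp add: lead_coeff_ap_poly)
next
  case (Suc k)
  have "poly_fun_on UNIV 1 (\<lambda>i. a + of_nat i * \<delta>)"
    using poly_fun_on_add[OF poly_fun_on_mono[OF poly_fun_on_const]
        poly_fun_on_mult[OF poly_fun_on_of_nat poly_fun_on_const]] by simp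
  from poly_fun_on_mult[OF this Suc.IH]
  have "poly_fun_on UNIV (Suc (2 * k))
      (\<lambda>i. (a + of_nat i * \<delta>) * coeff (reflect_poly (ap_poly a \<delta> i)) k)"
    by simp
  from poly_fun_on_partial_sums[OF this] show ?case
    by (simp add: coeff_Suc_reflect_ap_poly)
qed

definition top_coeffs_poly_on :: "nat set \<Rightarrow> (nat \<Rightarrow> 'a::comm_ring_1 poly) \<Rightarrow> bool" where
  "top_coeffs_poly_on S F \<longleftrightarrow> (\<forall>k. poly_fun_on S (2 * k) (\<lambda>j. coeff (reflect_poly (F j)) k))"

lemma top_coeffs_poly_on_mult:
  fixes F G :: "nat \<Rightarrow> 'a::idom poly"
  assumes "top_coeffs_poly_on S F" "top_coeffs_poly_on S G"
  shows "top_coeffs_poly_on S (\<lambda>j. F j * G j)"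
  unfolding top_coeffs_poly_on_def
proof
  fix k
  have "poly_fun_on S (2 * k)
      (\<lambda>j. \<Sum>i\<le>k. coeff (reflect_poly (F j)) i * coeff (reflect_poly (G j)) (k - i))"
  proof (rule poly_fun_on_sum)
    fix i assume "i \<in> {..k}"
    then have "2 * i + 2 * (k - i) = 2 * k" by auto
    then show "poly_fun_on S (2 * k)
        (\<lambda>j. coeff (reflect_poly (F j)) i * coeff (reflect_poly (G j)) (k - i))"
      using poly_fun_on_mult[of S "2 * i" _ "2 * (k - i)"] assms
      unfolding top_coeffs_poly_on_def by metis
  qed simp
  then show "poly_fun_on S (2 * k) (\<lambda>j. coeff (reflect_poly (F j * G j)) k)"
    by (simp add: reflect_poly_mult coeff_mult)
qed

lemma top_coeffs_poly_on_ap_poly: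
  fixes a \<delta> b c :: "'a::field_char_0"
  assumes "\<forall>j\<in>S. of_nat (L j) = b + c * of_nat j"
  shows "top_coeffs_poly_on S (\<lambda>j. ap_poly a \<delta> (L j))"
  unfolding top_coeffs_poly_on_def
  using poly_fun_on_compose_affine[OF poly_fun_on_coeff_reflect_ap_poly assms] by blast

lemma pochhammer_eq_ap_poly_rev:
  fixes a :: "'a::comm_ring_1"
  shows "pochhammer [:a, 1:] L = ap_poly (a + of_nat L - 1) (-1) L"
proof -
  have "pochhammer [:a, 1:] L = (\<Prod>i<L. [:a, 1:] + of_nat (L - Suc i))"
    unfolding pochhammer_prod atLeast0LessThan by (rule prod.nat_diff_reindex[symmetric])
  also have "\<dots> = ap_poly (a + of_nat L - 1) (-1) L"
    unfolding ap_poly_def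
    by (rule prod.cong) (auto simp: of_nat_poly of_nat_diff Suc_le_eq algebra_simps)
  finally show ?thesis .
qed

lemma pochhammer_eq_smult_ap_poly:
  fixes a c :: "'a::field"
  assumes "c \<noteq> 0"
  shows "pochhammer [:a, c:] L = smult (c ^ L) (ap_poly (a / c) (1 / c) L)"
proof -
  have "pochhammer [:a, c:] L = (\<Prod>i<L. smult c [:a / c + of_nat i * (1 / c), 1:])"
    unfolding pochhammer_prod atLeast0LessThan
    using assms by (intro prod.cong) (simp_all add: of_nat_poly field_simps)
  also have "\<dots> = smult (c ^ L) (ap_poly (a / c) (1 / c) L)"
    unfolding ap_poly_def prod_smult by simp
  finally show ?thesis .
qed

lemma coeff_eq_coeff_reflect_poly:
  "k \<le> degree P \<Longrightarrow> coeff P k = coeff (reflect_poly P) (degree P - k)"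
  by (auto simp: coeff_reflect_poly)

lemma pochhammer_product_eq_smult_ap_polys:
  fixes n m j :: nat
  assumes "1 \<le> j" "j \<le> n - 1"
  shows "pochhammer [:of_nat m + 1, 2:] j
           * pochhammer [:2 - of_nat j, 1:] (m div 2 + j - 1)
           * pochhammer [:of_nat m + 2 * of_nat j + 1, 1:] (2*n - 2*j - 2)
         = smult (2 ^ j) (ap_poly ((of_nat m + 1) / 2) (1 / 2) j
             * ap_poly (of_nat (m div 2)) (-1) (m div 2 + j - 1)
             * ap_poly (of_nat m + 2 * of_nat n - 2) (-1) (2*n - 2*j - 2) :: rat poly)"
proof -
  have "pochhammer [:2 - of_nat j, 1:] (m div 2 + j - 1)
      = (ap_poly (of_nat (m div 2)) (-1) (m div 2 + j - 1) :: rat poly)"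
    using assms(1) by (simp add: pochhammer_eq_ap_poly_rev of_nat_diff)
  moreover have "rat_of_nat (2*n - 2*j - 2) = 2 * of_nat n - 2 * of_nat j - 2"
    using assms by (auto simp: of_nat_diff)
  then have "pochhammer [:of_nat m + 2 * of_nat j + 1, 1:] (2*n - 2*j - 2)
      = (ap_poly (of_nat m + 2 * of_nat n - 2) (-1) (2*n - 2*j - 2) :: rat poly)"
    by (simp add: pochhammer_eq_ap_poly_rev algebra_simps)
  ultimately show ?thesis
    by (simp add: pochhammer_eq_smult_ap_poly)
qed

lemma top_coeffs_poly_on_ap_poly_factors:
  "top_coeffs_poly_on {1..n - 1} (\<lambda>j. ap_poly ((of_nat m + 1) / 2) (1 / 2) j
     * ap_poly (of_nat (m div 2)) (-1) (m div 2 + j - 1)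
     * ap_poly (of_nat m + 2 * of_nat n - 2) (-1) (2*n - 2*j - 2) :: rat poly)"
proof (intro top_coeffs_poly_on_mult)
  show "top_coeffs_poly_on {1..n - 1} (\<lambda>j. ap_poly ((of_nat m + 1) / 2) (1 / 2) j :: rat poly)"
    by (rule top_coeffs_poly_on_ap_poly[where b = 0 and c = 1]) simp
  show "top_coeffs_poly_on {1..n - 1}
      (\<lambda>j. ap_poly (of_nat (m div 2)) (-1) (m div 2 + j - 1) :: rat poly)"
    by (rule top_coeffs_poly_on_ap_poly[where b = "of_nat (m div 2) - 1" and c = 1])
      (auto simp: of_nat_diff)
  show "top_coeffs_poly_on {1..n - 1}
      (\<lambda>j. ap_poly (of_nat m + 2 * of_nat n - 2) (-1) (2*n - 2*j - 2) :: rat poly)"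
    by (rule top_coeffs_poly_on_ap_poly[where b = "2 * of_nat n - 2" and c = "-2"])
      (auto simp: of_nat_diff)
qed

theorem lemmaA9:
  fixes n m p :: nat
  assumes "n \<ge> 2" and "p \<le> 2*n + m div 2 - 3"
  shows "\<exists>\<beta> :: rat poly.
           degree \<beta> \<le> 2 * (2*n + m div 2 - 3 - p) \<and>
           (\<forall>j. 1 \<le> j \<and> j \<le> n - 1 \<longrightarrow>
              coeff (pochhammer [:of_nat m + 1, 2:] j
                     * pochhammer [:2 - of_nat j, 1:] (m div 2 + j - 1)
                     * pochhammer [:of_nat m + 2 * of_nat j + 1, 1:] (2*n - 2*j - 2)) p
              = 2 ^ j * poly \<beta> (of_nat j))"
proof -
  define N where "N = 2*n + m div 2 - 3"
  define F :: "nat \<Rightarrow> rat poly" where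
    "F j = ap_poly ((of_nat m + 1) / 2) (1 / 2) j
       * ap_poly (of_nat (m div 2)) (-1) (m div 2 + j - 1)
       * ap_poly (of_nat m + 2 * of_nat n - 2) (-1) (2*n - 2*j - 2)" for j
  obtain \<beta> where \<beta>: "degree \<beta> \<le> 2 * (N - p)"
    "\<forall>j\<in>{1..n - 1}. coeff (reflect_poly (F j)) (N - p) = poly \<beta> (of_nat j)"
    using top_coeffs_poly_on_ap_poly_factors[of n m]
    unfolding top_coeffs_poly_on_def poly_fun_on_def F_def by blast
  have "coeff (pochhammer [:of_nat m + 1, 2:] j
             * pochhammer [:2 - of_nat j, 1:] (m div 2 + j - 1)
             * pochhammer [:of_nat m + 2 * of_nat j + 1, 1:] (2*n - 2*j - 2)) p
          = 2 ^ j * poly \<beta> (of_nat j)" if j: "1 \<le> j \<and> j \<le> n - 1" for j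
  proof -
    have "degree (F j) = N"
      using j by (simp add: degree_mult_eq ap_poly_neq_0 degree_ap_poly F_def N_def) arith
    then have "coeff (F j) p = coeff (reflect_poly (F j)) (N - p)"
      using assms(2) by (simp add: coeff_eq_coeff_reflect_poly N_def)
    then show ?thesis
      using pochhammer_product_eq_smult_ap_polys[of j n m] j \<beta>(2) by (simp add: F_def)
  qed
  with \<beta>(1) show ?thesis
    unfolding N_def by blast
qed

end
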